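(* Let $K$ be a positive definite kernel on $\Omega\subset\mathbb{R}^d$, let $\lambda>0$, let $x_1,\dots,x_n\in\Omega$ be pairwise distinct, $X_k:=\{x_1,\dots,x_k\}$ for $0\le k\le n$, and let $f\in\mathcal{H}_\lambda$. With the functions $v_k^\lambda,v_k$ ($1\le k\le n$) defined in the context, it holds $$s_n^\lambda(f)=\sum_{k=1}^n (f,v_k^\lambda)_{\mathcal{H}_\lambda}\,v_k=s_{n-1}^\lambda(f)+(f,v_n^\lambda)_{\mathcal{H}_\lambda}\,v_n .$$ Moreover, if $f\in\mathcal{H}$, then $(f,v_k)_{\mathcal{H}}=(f,v_k^\lambda)_{\mathcal{H}_\lambda}$ for $1\le k\le n$, and therefore $$s_n^\lambda(f)=\sum_{k=1}^n (f,v_k)_{\mathcal{H}}\,v_k=s_{n-1}^\lambda(f)+(f,v_n)_{\mathcal{H}}\,v_n .$$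
   Context: A kernel $K:\Omega\times\Omega\to\mathbb{R}$ is positive definite if it is symmetric and all kernel matrices $(K(x_i,x_j))_{i,j}$ on pairwise distinct points are positive semidefinite (strictly positive definite: positive definite). $\mathcal{H}=\mathcal{H}_K(\Omega)$ is the native space (reproducing kernel Hilbert space) of $K$. Let $\delta(x,y)=1$ if $x=y$ and $0$ otherwise, $K_\lambda(x,y):=K(x,y)+\lambda\delta(x,y)$ (a strictly positive definite kernel for $\lambda>0$), and $\mathcal{H}_\lambda$ its native space. For pairwise distinct points $Y=\{y_1,\dots,y_m\}\subset\Omega$ with kernel matrix $A=(K(y_i,y_j))_{i,j}$ and a function $f:\Omega\to\mathbb{R}$, the regularized interpolant is $s^\lambda(f,Y):=\sum_{j=1}^m\alpha_jK(\cdot,y_j)$ with $(A+\lambda I)\alpha=(f(y_1),\dots,f(y_m))^T$; write $s_k^\lambda(f):=s^\lambda(f,X_k)$, with $s_0^\lambda(f):=0$. Let $A_n=(K(x_i,x_j))_{i,j=1}^n$, let $A_n+\lambda I=LL^T$ be the Cholesky factorization ($L$ lower triangular with positive diagonal), and $(\beta_{jk})_{j,k=1}^n:=L^{-T}$. Define $v_k^\lambda:=\sum_{j=1}^n\beta_{jk}K_\lambda(\cdot,x_j)$ (the Newton basis of $X_n$ in $\mathcal{H}_\lambda$) and $v_k:=\sum_{j=1}^n\beta_{jk}K(\cdot,x_j)$. *)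

theory Defs
  imports "HOL-Analysis.Analysis"
begin

definition pos_def_kernel :: "'a set \<Rightarrow> ('a \<Rightarrow> 'a \<Rightarrow> real) \<Rightarrow> bool" where
  "pos_def_kernel \<Omega> K \<longleftrightarrow>
     (\<forall>x\<in>\<Omega>. \<forall>y\<in>\<Omega>. K x y = K y x) \<and>
     (\<forall>(m::nat) (p::nat \<Rightarrow> 'a) (c::nat \<Rightarrow> real).
        inj_on p {..<m} \<and> p ` {..<m} \<subseteq> \<Omega> \<longrightarrow>
        0 \<le> (\<Sum>i<m. \<Sum>j<m. c i * c j * K (p i) (p j)))"

definition Klam :: "('a \<Rightarrow> 'a \<Rightarrow> real) \<Rightarrow> real \<Rightarrow> 'a \<Rightarrow> 'a \<Rightarrow> real" where
  "Klam K lam x y = K x y + (if x = y then lam else 0)"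

text \<open>Finite kernel combinations (elements of the pre-Hilbert space H_0):
  a finite centre set S and coefficients c.\<close>
type_synonym 'a combo = "'a set \<times> ('a \<Rightarrow> real)"

definition combo_fun :: "('a \<Rightarrow> 'a \<Rightarrow> real) \<Rightarrow> 'a combo \<Rightarrow> 'a \<Rightarrow> real" where
  "combo_fun K a = (\<lambda>z. \<Sum>y\<in>fst a. snd a y * K z y)"

definition pre_inner :: "('a \<Rightarrow> 'a \<Rightarrow> real) \<Rightarrow> 'a combo \<Rightarrow> 'a combo \<Rightarrow> real" where
  "pre_inner K a b = (\<Sum>y\<in>fst a. \<Sum>z\<in>fst b. snd a y * snd b z * K y z)"

definition pre_dist2 :: "('a \<Rightarrow> 'a \<Rightarrow> real) \<Rightarrow> 'a combo \<Rightarrow> 'a combo \<Rightarrow> real" where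
  "pre_dist2 K a b = pre_inner K a a - 2 * pre_inner K a b + pre_inner K b b"

definition represents :: "'a set \<Rightarrow> ('a \<Rightarrow> 'a \<Rightarrow> real) \<Rightarrow> (nat \<Rightarrow> 'a combo) \<Rightarrow> ('a \<Rightarrow> real) \<Rightarrow> bool" where
  "represents \<Omega> K s f \<longleftrightarrow>
     (\<forall>n. finite (fst (s n)) \<and> fst (s n) \<subseteq> \<Omega>) \<and>
     (\<forall>e>0. \<exists>N. \<forall>m\<ge>N. \<forall>n\<ge>N. pre_dist2 K (s m) (s n) < e) \<and>
     (\<forall>x\<in>\<Omega>. (\<lambda>n. combo_fun K (s n) x) \<longlonglongrightarrow> f x)"

text \<open>Native space (RKHS) of K on \<Omega>: the completion of H_0, realised as
  functions on \<Omega>.\<close>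
definition native_space :: "'a set \<Rightarrow> ('a \<Rightarrow> 'a \<Rightarrow> real) \<Rightarrow> ('a \<Rightarrow> real) set" where
  "native_space \<Omega> K = {f. \<exists>s. represents \<Omega> K s f}"

definition native_inner :: "'a set \<Rightarrow> ('a \<Rightarrow> 'a \<Rightarrow> real) \<Rightarrow> ('a \<Rightarrow> real) \<Rightarrow> ('a \<Rightarrow> real) \<Rightarrow> real" where
  "native_inner \<Omega> K f g = (THE r. \<forall>s t. represents \<Omega> K s f \<and> represents \<Omega> K t g \<longrightarrow>
        (\<lambda>n. pre_inner K (s n) (t n)) \<longlonglongrightarrow> r)"

text \<open>Regularized interpolant on X_k = {x_1,...,x_k}:
  sum_j alpha_j K(.,x_j) with (A + lam I) alpha = f|X_k.  For k = 0 this is 0.\<close>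
definition reg_interp :: "('a \<Rightarrow> 'a \<Rightarrow> real) \<Rightarrow> real \<Rightarrow> (nat \<Rightarrow> 'a) \<Rightarrow> nat \<Rightarrow> ('a \<Rightarrow> real) \<Rightarrow> 'a \<Rightarrow> real" where
  "reg_interp K lam x k f =
     (let \<alpha> = (THE \<alpha>::nat \<Rightarrow> real. (\<forall>i. i \<notin> {1..k} \<longrightarrow> \<alpha> i = 0) \<and>
                  (\<forall>i\<in>{1..k}. (\<Sum>j=1..k. (K (x i) (x j) + (if i = j then lam else 0)) * \<alpha> j) = f (x i)))
      in (\<lambda>z. \<Sum>j=1..k. \<alpha> j * K z (x j)))"

end

theory Submission
  imports Defs
begin

(*
  Write G = A_n + lam I = L L^T and beta = L^-T.  Then G^-1 = beta beta^T, so the coefficient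
  vector of s_n^lam(f) is beta gamma with gamma_k = sum_j beta_jk f(x_j), i.e.
  s_n^lam(f) = sum_k gamma_k v_k.  Both v_k^lam and v_k are finite kernel combinations with the
  coefficients beta_jk, so by the reproducing property (of K_lam in H_lam, resp. of K in H) both
  (f, v_k^lam) and (f, v_k) equal gamma_k.  As L is lower triangular, the leading blocks of L and
  beta are a Cholesky factor of A_(n-1) + lam I and its inverse transpose, and the last row of
  beta vanishes left of the diagonal; hence s_(n-1)^lam(f) consists of the first n-1 terms.

  Since the native space is realised as a completion, the reproducing property itself needs the
  standard completion argument: a Cauchy sequence of kernel combinations that tends to 0
  pointwise tends to 0 in norm, so the limit of the pre-inner products does not depend on the
  representing sequences.
*)

section \<open>Kernel combinations as a pre-Hilbert space\<close>

lemma pos_def_kernel_commute: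
  "pos_def_kernel \<Omega> k \<Longrightarrow> x \<in> \<Omega> \<Longrightarrow> y \<in> \<Omega> \<Longrightarrow> k x y = k y x"
  unfolding pos_def_kernel_def by blast

lemma pos_def_kernel_nonneg:
  fixes m :: nat
  assumes "pos_def_kernel \<Omega> K" "inj_on p {..<m}" "p ` {..<m} \<subseteq> \<Omega>"
  shows "0 \<le> (\<Sum>i<m. \<Sum>j<m. c i * c j * K (p i) (p j))"
  using assms unfolding pos_def_kernel_def by blast

lemma pos_def_kernel_quadratic_form_nonneg:
  assumes K: "pos_def_kernel \<Omega> K" and I: "finite I" "inj_on p I" "p ` I \<subseteq> \<Omega>"
  shows "0 \<le> (\<Sum>i\<in>I. \<Sum>j\<in>I. c i * c j * K (p i) (p j))"
proof -
  obtain h where h: "bij_betw h {..<card I} I"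
    using ex_bij_betw_nat_finite[OF I(1)] by (auto simp: atLeast0LessThan)
  have "inj_on (p \<circ> h) {..<card I}"
    using h I(2) by (simp add: bij_betw_def comp_inj_on)
  moreover have "(p \<circ> h) ` {..<card I} \<subseteq> \<Omega>"
    using h I(3) unfolding bij_betw_def image_comp[symmetric] by simp
  ultimately have "0 \<le> (\<Sum>i<card I. \<Sum>j<card I. c (h i) * c (h j) * K (p (h i)) (p (h j)))"
    using pos_def_kernel_nonneg[OF K, of "p \<circ> h" "card I" "\<lambda>i. c (h i)"] by simp
  also have "\<dots> = (\<Sum>i<card I. \<Sum>j\<in>I. c (h i) * c j * K (p (h i)) (p j))"
    by (intro sum.cong refl) (rule sum.reindex_bij_betw[OF h])
  also have "\<dots> = (\<Sum>i\<in>I. \<Sum>j\<in>I. c i * c j * K (p i) (p j))"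
    by (rule sum.reindex_bij_betw[OF h])
  finally show ?thesis .
qed

definition combo_on :: "'a set \<Rightarrow> 'a combo \<Rightarrow> bool" where
  "combo_on \<Omega> a \<longleftrightarrow> finite (fst a) \<and> fst a \<subseteq> \<Omega>"

definition combo_coeff :: "'a combo \<Rightarrow> 'a \<Rightarrow> real" where
  "combo_coeff a y = (if y \<in> fst a then snd a y else 0)"

definition combo_diff :: "'a combo \<Rightarrow> 'a combo \<Rightarrow> 'a combo" where
  "combo_diff a b = (fst a \<union> fst b, \<lambda>y. combo_coeff a y - combo_coeff b y)"

lemma combo_on_combo_diff:
  "combo_on \<Omega> a \<Longrightarrow> combo_on \<Omega> b \<Longrightarrow> combo_on \<Omega> (combo_diff a b)"
  by (simp add: combo_on_def combo_diff_def)

text \<open>On a fixed finite centre set \<open>U\<close>, \<open>pre_inner k (U, p) (U, q)\<close> is a bilinear form in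
  the coefficient functions \<open>p\<close> and \<open>q\<close>; extending coefficients by zero brings any two
  combinations onto a common centre set.\<close>

lemma combo_fun_extend:
  assumes "finite U" "fst a \<subseteq> U"
  shows "combo_fun k a = combo_fun k (U, combo_coeff a)"
  unfolding combo_fun_def using assms
  by (auto intro!: sum.mono_neutral_cong_left simp: combo_coeff_def)

lemma pre_inner_extend_left:
  assumes "finite U" "fst a \<subseteq> U"
  shows "pre_inner k a b = pre_inner k (U, combo_coeff a) b"
  unfolding pre_inner_def
  by (rule sum.mono_neutral_cong_left) (use assms in \<open>auto simp: combo_coeff_def\<close>)

lemma pre_inner_extend_right:
  assumes "finite U" "fst b \<subseteq> U"
  shows "pre_inner k a b = pre_inner k a (U, combo_coeff b)"
  unfolding pre_inner_def
  by (rule sum.cong[OF refl], rule sum.mono_neutral_cong_left)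
    (use assms in \<open>auto simp: combo_coeff_def\<close>)

lemma pre_inner_extend:
  assumes "finite U" "fst a \<subseteq> U" "fst b \<subseteq> U"
  shows "pre_inner k a b = pre_inner k (U, combo_coeff a) (U, combo_coeff b)"
  by (rule trans[OF pre_inner_extend_left pre_inner_extend_right]) (use assms in auto)

lemma pre_inner_diff_left:
  "pre_inner k (U, \<lambda>y. p y - q y) b = pre_inner k (U, p) b - pre_inner k (U, q) b"
  by (simp add: pre_inner_def left_diff_distrib sum_subtractf)

lemma pre_inner_diff_right:
  "pre_inner k a (U, \<lambda>y. p y - q y) = pre_inner k a (U, p) - pre_inner k a (U, q)"
  by (simp add: pre_inner_def right_diff_distrib left_diff_distrib sum_subtractf)

lemma pre_inner_scale_left:
  "pre_inner k (U, \<lambda>y. c * p y) b = c * pre_inner k (U, p) b"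
  by (simp add: pre_inner_def sum_distrib_left mult.assoc)

lemma pre_inner_scale_right:
  "pre_inner k a (U, \<lambda>y. c * p y) = c * pre_inner k a (U, p)"
  by (simp add: pre_inner_def sum_distrib_left mult_ac)

lemma combo_fun_combo_diff:
  assumes "finite (fst a)" "finite (fst b)"
  shows "combo_fun k (combo_diff a b) z = combo_fun k a z - combo_fun k b z"
  using combo_fun_extend[of "fst a \<union> fst b" a k] combo_fun_extend[of "fst a \<union> fst b" b k]
    assms
  by (simp add: combo_diff_def combo_fun_def left_diff_distrib sum_subtractf)

lemma pre_inner_combo_diff_left:
  assumes "finite (fst a)" "finite (fst b)"
  shows "pre_inner k (combo_diff a b) c = pre_inner k a c - pre_inner k b c"
  using pre_inner_extend_left[of "fst a \<union> fst b" a k c]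
    pre_inner_extend_left[of "fst a \<union> fst b" b k c] assms
  by (simp add: combo_diff_def pre_inner_diff_left)

lemma pre_inner_combo_diff_right:
  assumes "finite (fst b)" "finite (fst c)"
  shows "pre_inner k a (combo_diff b c) = pre_inner k a b - pre_inner k a c"
  using pre_inner_extend_right[of "fst b \<union> fst c" b k a]
    pre_inner_extend_right[of "fst b \<union> fst c" c k a] assms
  by (simp add: combo_diff_def pre_inner_diff_right)

lemma pre_inner_commute:
  assumes k: "pos_def_kernel \<Omega> k" and "fst a \<subseteq> \<Omega>" "fst b \<subseteq> \<Omega>"
  shows "pre_inner k a b = pre_inner k b a"
proof -
  have "pre_inner k a b = (\<Sum>z\<in>fst b. \<Sum>y\<in>fst a. snd a y * snd b z * k y z)"
    unfolding pre_inner_def by (rule sum.swap)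
  also have "\<dots> = pre_inner k b a"
    unfolding pre_inner_def using assms
    by (intro sum.cong refl) (simp add: pos_def_kernel_commute[OF k] subset_iff)
  finally show ?thesis .
qed

lemma pre_inner_eq_sum_combo_fun:
  assumes k: "pos_def_kernel \<Omega> k" and "fst a \<subseteq> \<Omega>" "fst b \<subseteq> \<Omega>"
  shows "pre_inner k a b = (\<Sum>z\<in>fst b. snd b z * combo_fun k a z)"
proof -
  have "pre_inner k a b = (\<Sum>z\<in>fst b. \<Sum>y\<in>fst a. snd a y * snd b z * k y z)"
    unfolding pre_inner_def by (rule sum.swap)
  also have "\<dots> = (\<Sum>z\<in>fst b. snd b z * combo_fun k a z)"
    unfolding combo_fun_def sum_distrib_left using assms
    by (intro sum.cong refl) (simp add: pos_def_kernel_commute[OF k] subset_iff)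
  finally show ?thesis .
qed

lemma pre_inner_self_nonneg:
  assumes "pos_def_kernel \<Omega> k" "combo_on \<Omega> a"
  shows "0 \<le> pre_inner k a a"
proof -
  have "0 \<le> (\<Sum>i\<in>fst a. \<Sum>j\<in>fst a. snd a i * snd a j * k (id i) (id j))"
    using assms(2) unfolding combo_on_def
    by (intro pos_def_kernel_quadratic_form_nonneg[OF assms(1)]) auto
  then show ?thesis by (simp add: pre_inner_def)
qed

lemma quadratic_nonneg_imp_discriminant_le:
  fixes a b c :: real
  assumes "a \<ge> 0" "\<And>t. 0 \<le> c - 2 * t * b + t\<^sup>2 * a"
  shows "b\<^sup>2 \<le> a * c"
proof (cases "a > 0")
  case True
  have "0 \<le> c - 2 * (b / a) * b + (b / a)\<^sup>2 * a" by (rule assms(2))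
  also have "\<dots> = c - b\<^sup>2 / a" using True by (simp add: field_simps power2_eq_square)
  finally show ?thesis using True by (simp add: field_simps)
next
  case False
  then have a: "a = 0" using assms(1) by simp
  show ?thesis
  proof (cases "b = 0")
    case False
    have "0 \<le> c - 2 * ((c + 1) / (2 * b)) * b + ((c + 1) / (2 * b))\<^sup>2 * a" by (rule assms(2))
    also have "\<dots> = -1" using False a by (simp add: field_simps)
    finally show ?thesis by simp
  qed (simp add: a)
qed

lemma pre_inner_Cauchy_Schwarz:
  assumes k: "pos_def_kernel \<Omega> k" and "combo_on \<Omega> a" "combo_on \<Omega> b"
  shows "(pre_inner k a b)\<^sup>2 \<le> pre_inner k a a * pre_inner k b b"
proof -
  define U where "U = fst a \<union> fst b"
  define p q where "p = combo_coeff a" and "q = combo_coeff b"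
  have U: "combo_on \<Omega> (U, r)" for r
    using assms by (simp add: U_def combo_on_def)
  have ext: "pre_inner k a b = pre_inner k (U, p) (U, q)"
    "pre_inner k a a = pre_inner k (U, p) (U, p)" "pre_inner k b b = pre_inner k (U, q) (U, q)"
    using assms unfolding p_def q_def U_def combo_on_def by (auto intro: pre_inner_extend)
  have "(pre_inner k (U, p) (U, q))\<^sup>2 \<le> pre_inner k (U, q) (U, q) * pre_inner k (U, p) (U, p)"
  proof (rule quadratic_nonneg_imp_discriminant_le)
    show "0 \<le> pre_inner k (U, q) (U, q)" by (rule pre_inner_self_nonneg[OF k U])
    fix t
    have "0 \<le> pre_inner k (U, \<lambda>y. p y - t * q y) (U, \<lambda>y. p y - t * q y)"
      by (rule pre_inner_self_nonneg[OF k U])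
    also have "\<dots> = pre_inner k (U, p) (U, p) - t * pre_inner k (U, p) (U, q)
        - t * pre_inner k (U, q) (U, p) + t * (t * pre_inner k (U, q) (U, q))"
      by (simp add: pre_inner_diff_left pre_inner_diff_right pre_inner_scale_left
          pre_inner_scale_right algebra_simps)
    also have "\<dots> = pre_inner k (U, p) (U, p) - 2 * t * pre_inner k (U, p) (U, q)
        + t\<^sup>2 * pre_inner k (U, q) (U, q)"
      using pre_inner_commute[OF k, of "(U, p)" "(U, q)"] U
      by (simp add: combo_on_def power2_eq_square algebra_simps)
    finally show "0 \<le> pre_inner k (U, p) (U, p) - 2 * t * pre_inner k (U, p) (U, q)
        + t\<^sup>2 * pre_inner k (U, q) (U, q)" .
  qed
  then show ?thesis by (simp add: ext mult.commute)
qed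

lemma pre_inner_combo_diff_self:
  assumes "pos_def_kernel \<Omega> k" "combo_on \<Omega> a" "combo_on \<Omega> b"
  shows "pre_inner k (combo_diff a b) (combo_diff a b) = pre_dist2 k a b"
  using pre_inner_commute[OF assms(1), of a b] assms(2,3)
  by (simp add: pre_inner_combo_diff_left pre_inner_combo_diff_right pre_dist2_def combo_on_def)

lemma pre_inner_self_le_double:
  assumes k: "pos_def_kernel \<Omega> k" and "combo_on \<Omega> a" "combo_on \<Omega> b"
  shows "pre_inner k a a \<le> 2 * pre_inner k b b + 2 * pre_dist2 k a b"
proof -
  define U where "U = fst a \<union> fst b"
  define p q where "p = combo_coeff a" and "q = combo_coeff b"
  have U: "combo_on \<Omega> (U, r)" for r
    using assms by (simp add: U_def combo_on_def)
  have ext: "pre_inner k a b = pre_inner k (U, p) (U, q)"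
    "pre_inner k a a = pre_inner k (U, p) (U, p)" "pre_inner k b b = pre_inner k (U, q) (U, q)"
    using assms unfolding p_def q_def U_def combo_on_def by (auto intro: pre_inner_extend)
  have "0 \<le> pre_inner k (U, \<lambda>y. p y - 2 * q y) (U, \<lambda>y. p y - 2 * q y)"
    by (rule pre_inner_self_nonneg[OF k U])
  also have "\<dots> = pre_inner k (U, p) (U, p) - 2 * pre_inner k (U, p) (U, q)
        - 2 * pre_inner k (U, q) (U, p) + 2 * (2 * pre_inner k (U, q) (U, q))"
    by (simp add: pre_inner_diff_left pre_inner_diff_right pre_inner_scale_left
        pre_inner_scale_right)
  finally show ?thesis
    using pre_inner_commute[OF k, of "(U, p)" "(U, q)"] U
    by (simp add: ext pre_dist2_def combo_on_def)
qed

section \<open>The reproducing property in the native space\<close>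

lemma represents_combo_on: "represents \<Omega> k s f \<Longrightarrow> combo_on \<Omega> (s m)"
  by (simp add: represents_def combo_on_def)

lemma represents_const: "combo_on \<Omega> a \<Longrightarrow> represents \<Omega> k (\<lambda>_. a) (combo_fun k a)"
  by (simp add: represents_def combo_on_def pre_dist2_def)

lemma represents_combo_diff_const:
  assumes k: "pos_def_kernel \<Omega> k" and t: "represents \<Omega> k t g" and a: "combo_on \<Omega> a"
  shows "represents \<Omega> k (\<lambda>m. combo_diff (t m) a) (\<lambda>z. g z - combo_fun k a z)"
proof -
  have t_on: "combo_on \<Omega> (t m)" for m
    using t by (rule represents_combo_on)
  have "pre_dist2 k (combo_diff (t m) a) (combo_diff (t l) a) = pre_dist2 k (t m) (t l)" for m l
    using pre_inner_commute[OF k, of a "t m"] pre_inner_commute[OF k, of a "t l"]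
      pre_inner_commute[OF k, of "t m" "t l"] t_on[of m] t_on[of l] a
    by (simp add: pre_dist2_def pre_inner_combo_diff_left pre_inner_combo_diff_right combo_on_def
)
  moreover have "combo_fun k (combo_diff (t m) a) z = combo_fun k (t m) z - combo_fun k a z" for m z
    using t_on[of m] a by (simp add: combo_fun_combo_diff combo_on_def)
  moreover have "combo_on \<Omega> (combo_diff (t m) a)" for m
    using combo_on_combo_diff[OF t_on a] .
  ultimately show ?thesis
    using t unfolding represents_def combo_on_def by (auto intro!: tendsto_diff)
qed

lemma less_of_split_square:
  fixes Q t1 t2 d e :: real
  assumes "0 \<le> Q" "Q = t1 + t2" "t1\<^sup>2 \<le> d * Q" "d < e / 8" "\<bar>t2\<bar> < e / 4"
  shows "Q < e"
proof (rule ccontr)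
  assume "\<not> Q < e"
  then have Qe: "e \<le> Q" by simp
  have "0 < e" using assms(5) by linarith
  then have Q: "0 < Q" using Qe by linarith
  have "0 \<le> d * Q" using assms(3) by (meson order_trans zero_le_power2)
  then have "0 \<le> d" using Q by (simp add: zero_le_mult_iff)
  have "3 * Q / 4 \<le> t1" using assms Qe by linarith
  then have "(3 * Q / 4)\<^sup>2 \<le> t1\<^sup>2" using Qe assms by (intro power_mono) auto
  also have "\<dots> \<le> d * Q" by fact
  also have "\<dots> \<le> Q / 8 * Q" using assms Qe Q by (intro mult_right_mono) auto
  finally have "9 * Q\<^sup>2 \<le> 2 * Q\<^sup>2" by (simp add: power2_eq_square field_simps)
  moreover have "Q\<^sup>2 > 0" using Q by simp
  ultimately show False by simp
qed

lemma represents_zero_pre_inner_tendsto_0: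
  assumes k: "pos_def_kernel \<Omega> k" and c: "represents \<Omega> k c (\<lambda>_. 0)"
  shows "(\<lambda>m. pre_inner k (c m) (c m)) \<longlonglongrightarrow> 0"
proof (rule LIMSEQ_I)
  fix e :: real
  assume "0 < e"
  have c_on: "combo_on \<Omega> (c m)" for m
    using c by (rule represents_combo_on)
  have "\<exists>N. \<forall>m\<ge>N. \<forall>l\<ge>N. pre_dist2 k (c m) (c l) < e / 8"
    using c \<open>0 < e\<close> unfolding represents_def by (meson zero_less_divide_iff zero_less_numeral)
  then obtain N where N: "\<And>m. m \<ge> N \<Longrightarrow> pre_dist2 k (c m) (c N) < e / 8"
    by blast
  have "(\<lambda>m. \<Sum>z\<in>fst (c N). snd (c N) z * combo_fun k (c m) z)
      \<longlonglongrightarrow> (\<Sum>z\<in>fst (c N). snd (c N) z * 0)"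
    using c c_on[of N] unfolding represents_def combo_on_def
    by (intro tendsto_intros) (meson subsetD)
  then have "(\<lambda>m. pre_inner k (c m) (c N)) \<longlonglongrightarrow> 0"
    using c_on by (simp add: pre_inner_eq_sum_combo_fun[OF k] combo_on_def)
  moreover have "0 < e / 4"
    using \<open>0 < e\<close> by simp
  ultimately obtain M where M: "\<And>m. m \<ge> M \<Longrightarrow> norm (pre_inner k (c m) (c N) - 0) < e / 4"
    using LIMSEQ_D by blast
  show "\<exists>M. \<forall>m\<ge>M. norm (pre_inner k (c m) (c m) - 0) < e"
  proof (intro exI allI impI)
    fix m
    assume "max N M \<le> m"
    \<comment> \<open>Split off the part of \<open>c m\<close> that is close to \<open>c N\<close>; the rest is an
      evaluation of \<open>c m\<close> at the finitely many centres of \<open>c N\<close>.\<close>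
    have split: "pre_inner k (c m) (c m)
        = pre_inner k (c m) (combo_diff (c m) (c N)) + pre_inner k (c m) (c N)"
      using c_on by (simp add: pre_inner_combo_diff_right combo_on_def)
    have "(pre_inner k (c m) (combo_diff (c m) (c N)))\<^sup>2
        \<le> pre_dist2 k (c m) (c N) * pre_inner k (c m) (c m)"
      using pre_inner_Cauchy_Schwarz[OF k c_on combo_on_combo_diff[OF c_on c_on], of m m N]
      by (simp add: pre_inner_combo_diff_self[OF k c_on c_on] mult.commute)
    then have "pre_inner k (c m) (c m) < e"
      using less_of_split_square[OF pre_inner_self_nonneg[OF k c_on] split] N M \<open>max N M \<le> m\<close>
      by simp
    then show "norm (pre_inner k (c m) (c m) - 0) < e"
      using pre_inner_self_nonneg[OF k c_on] by simp
  qed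
qed

lemma represents_pre_inner_bounded:
  assumes k: "pos_def_kernel \<Omega> k" and s: "represents \<Omega> k s f"
  shows "\<exists>C. \<forall>\<^sub>F m in sequentially. pre_inner k (s m) (s m) \<le> C"
proof -
  have "\<exists>N. \<forall>m\<ge>N. \<forall>l\<ge>N. pre_dist2 k (s m) (s l) < 1"
    using s unfolding represents_def by simp
  then obtain N where N: "\<And>m. m \<ge> N \<Longrightarrow> pre_dist2 k (s m) (s N) < 1"
    by blast
  have "pre_inner k (s m) (s m) \<le> 2 * pre_inner k (s N) (s N) + 2" if "m \<ge> N" for m
    using pre_inner_self_le_double[OF k represents_combo_on[OF s] represents_combo_on[OF s], of m N]
      N[OF that] by linarith
  then have "\<forall>\<^sub>F m in sequentially. pre_inner k (s m) (s m) \<le> 2 * pre_inner k (s N) (s N) + 2"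
    by (rule eventually_sequentiallyI)
  then show ?thesis ..
qed

lemma pre_inner_tendsto_0_if_bounded:
  assumes k: "pos_def_kernel \<Omega> k"
    and a: "\<And>m. combo_on \<Omega> (a m)" and b: "\<And>m. combo_on \<Omega> (b m)"
    and bounded: "\<forall>\<^sub>F m in sequentially. pre_inner k (a m) (a m) \<le> C"
    and null: "(\<lambda>m. pre_inner k (b m) (b m)) \<longlonglongrightarrow> 0"
  shows "(\<lambda>m. pre_inner k (a m) (b m)) \<longlonglongrightarrow> 0"
proof (rule Lim_null_comparison)
  show "\<forall>\<^sub>F m in sequentially.
      norm (pre_inner k (a m) (b m)) \<le> sqrt (C * pre_inner k (b m) (b m))"
    using bounded
  proof eventually_elim
    case (elim m)
    have "(pre_inner k (a m) (b m))\<^sup>2 \<le> pre_inner k (a m) (a m) * pre_inner k (b m) (b m)"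
      by (rule pre_inner_Cauchy_Schwarz[OF k a b])
    also have "\<dots> \<le> C * pre_inner k (b m) (b m)"
      by (rule mult_right_mono[OF elim pre_inner_self_nonneg[OF k b]])
    finally have "(norm (pre_inner k (a m) (b m)))\<^sup>2 \<le> C * pre_inner k (b m) (b m)"
      by simp
    then show ?case
      by (rule real_le_rsqrt)
  qed
  show "(\<lambda>m. sqrt (C * pre_inner k (b m) (b m))) \<longlonglongrightarrow> 0"
    using tendsto_real_sqrt[OF tendsto_mult_right_zero[OF null, of C]] by simp
qed

lemma represents_pre_inner_tendsto:
  assumes k: "pos_def_kernel \<Omega> k" and s: "represents \<Omega> k s f"
    and t: "represents \<Omega> k t (combo_fun k a)" and a: "combo_on \<Omega> a"
  shows "(\<lambda>m. pre_inner k (s m) (t m)) \<longlonglongrightarrow> (\<Sum>z\<in>fst a. snd a z * f z)"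
proof -
  define D where "D m = combo_diff (t m) a" for m
  have s_on: "combo_on \<Omega> (s m)" and D_on: "combo_on \<Omega> (D m)" for m
    unfolding D_def
    using represents_combo_on[OF s] combo_on_combo_diff[OF represents_combo_on[OF t] a] .
  have split: "pre_inner k (s m) (t m)
      = (\<Sum>z\<in>fst a. snd a z * combo_fun k (s m) z) + pre_inner k (s m) (D m)" for m
    using represents_combo_on[OF t, of m] s_on[of m] a
    by (simp add: D_def pre_inner_combo_diff_right pre_inner_eq_sum_combo_fun[OF k] combo_on_def)
  have "(\<lambda>m. \<Sum>z\<in>fst a. snd a z * combo_fun k (s m) z) \<longlonglongrightarrow> (\<Sum>z\<in>fst a. snd a z * f z)"
    using s a unfolding represents_def combo_on_def by (intro tendsto_intros) auto
  moreover have "(\<lambda>m. pre_inner k (s m) (D m)) \<longlonglongrightarrow> 0"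
  proof -
    have "represents \<Omega> k D (\<lambda>_. 0)"
      using represents_combo_diff_const[OF k t a] unfolding D_def by simp
    then have D_null: "(\<lambda>m. pre_inner k (D m) (D m)) \<longlonglongrightarrow> 0"
      by (rule represents_zero_pre_inner_tendsto_0[OF k])
    obtain C where "\<forall>\<^sub>F m in sequentially. pre_inner k (s m) (s m) \<le> C"
      using represents_pre_inner_bounded[OF k s] by blast
    from pre_inner_tendsto_0_if_bounded[where a = s and b = D, OF k s_on D_on this D_null]
    show ?thesis .
  qed
  ultimately show ?thesis
    unfolding split using tendsto_add by fastforce
qed

lemma native_inner_combo_fun:
  assumes k: "pos_def_kernel \<Omega> k" and f: "f \<in> native_space \<Omega> k" and a: "combo_on \<Omega> a"
  shows "native_inner \<Omega> k f (combo_fun k a) = (\<Sum>z\<in>fst a. snd a z * f z)"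
  unfolding native_inner_def
proof (rule the_equality)
  show "\<forall>s t. represents \<Omega> k s f \<and> represents \<Omega> k t (combo_fun k a) \<longrightarrow>
      (\<lambda>m. pre_inner k (s m) (t m)) \<longlonglongrightarrow> (\<Sum>z\<in>fst a. snd a z * f z)"
    using represents_pre_inner_tendsto[OF k _ _ a] by blast
next
  fix r
  assume "\<forall>s t. represents \<Omega> k s f \<and> represents \<Omega> k t (combo_fun k a) \<longrightarrow>
      (\<lambda>m. pre_inner k (s m) (t m)) \<longlonglongrightarrow> r"
  moreover obtain s where s: "represents \<Omega> k s f"
    using f unfolding native_space_def by blast
  ultimately have "(\<lambda>m. pre_inner k (s m) a) \<longlonglongrightarrow> r"
    using represents_const[OF a] by blast
  then show "r = (\<Sum>z\<in>fst a. snd a z * f z)"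
    using represents_pre_inner_tendsto[OF k s represents_const[OF a] a] LIMSEQ_unique by blast
qed

lemma native_inner_kernel_sum:
  assumes k: "pos_def_kernel \<Omega> k" and f: "f \<in> native_space \<Omega> k"
    and I: "finite I" "inj_on x I" "x ` I \<subseteq> \<Omega>"
  shows "native_inner \<Omega> k f (\<lambda>z. \<Sum>j\<in>I. c j * k z (x j)) = (\<Sum>j\<in>I. c j * f (x j))"
proof -
  define a where "a = (x ` I, \<lambda>y. c (inv_into I x y))"
  have a: "combo_on \<Omega> a"
    using I by (simp add: a_def combo_on_def)
  have reindex: "(\<Sum>y\<in>x ` I. c (inv_into I x y) * g y) = (\<Sum>j\<in>I. c j * g (x j))"
    for g :: "'a \<Rightarrow> real"
    using I(2) by (simp add: sum.reindex)
  have "(\<lambda>z. \<Sum>j\<in>I. c j * k z (x j)) = combo_fun k a"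
    by (simp add: a_def combo_fun_def reindex)
  then show ?thesis
    using native_inner_combo_fun[OF k f a] by (simp add: a_def reindex)
qed

section \<open>Regularized interpolation through the Cholesky factor\<close>

lemma quadratic_form_add_diagonal:
  fixes A :: "'i \<Rightarrow> 'i \<Rightarrow> real"
  assumes "finite I"
  shows "(\<Sum>i\<in>I. \<Sum>j\<in>I. c i * c j * (A i j + (if i = j then lam else 0)))
    = (\<Sum>i\<in>I. \<Sum>j\<in>I. c i * c j * A i j) + lam * (\<Sum>i\<in>I. (c i)\<^sup>2)"
proof -
  have "(\<Sum>i\<in>I. \<Sum>j\<in>I. c i * c j * (if i = j then lam else 0)) = lam * (\<Sum>i\<in>I. (c i)\<^sup>2)"
    using assms
    by (simp add: if_distrib sum.delta sum_distrib_left power2_eq_square mult_ac cong: if_cong)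
  then show ?thesis
    by (simp add: distrib_left sum.distrib)
qed

lemma pos_def_kernel_Klam:
  assumes K: "pos_def_kernel \<Omega> K" and lam: "lam \<ge> 0"
  shows "pos_def_kernel \<Omega> (Klam K lam)"
  unfolding pos_def_kernel_def
proof (intro conjI allI impI ballI)
  fix x y
  assume "x \<in> \<Omega>" "y \<in> \<Omega>"
  then show "Klam K lam x y = Klam K lam y x"
    by (simp add: Klam_def pos_def_kernel_commute[OF K])
next
  fix m :: nat and p :: "nat \<Rightarrow> 'a" and c :: "nat \<Rightarrow> real"
  assume p: "inj_on p {..<m} \<and> p ` {..<m} \<subseteq> \<Omega>"
  have "(\<Sum>i<m. \<Sum>j<m. c i * c j * Klam K lam (p i) (p j))
      = (\<Sum>i<m. \<Sum>j<m. c i * c j * (K (p i) (p j) + (if i = j then lam else 0)))"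
    using p by (intro sum.cong refl) (auto simp: Klam_def inj_on_eq_iff)
  also have "\<dots> = (\<Sum>i<m. \<Sum>j<m. c i * c j * K (p i) (p j)) + lam * (\<Sum>i<m. (c i)\<^sup>2)"
    by (simp add: quadratic_form_add_diagonal)
  also have "\<dots> \<ge> 0"
    using pos_def_kernel_nonneg[OF K] p lam by (simp add: sum_nonneg)
  finally show "0 \<le> (\<Sum>i<m. \<Sum>j<m. c i * c j * Klam K lam (p i) (p j))" .
qed

lemma regularized_kernel_matrix_injective:
  assumes K: "pos_def_kernel \<Omega> K" and lam: "lam > 0"
    and I: "finite I" "inj_on x I" "x ` I \<subseteq> \<Omega>"
    and w: "\<forall>i\<in>I. (\<Sum>j\<in>I. (K (x i) (x j) + (if i = j then lam else 0)) * w j) = 0"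
  shows "\<forall>i\<in>I. w i = 0"
proof -
  have "0 = (\<Sum>i\<in>I. w i * (\<Sum>j\<in>I. (K (x i) (x j) + (if i = j then lam else 0)) * w j))"
    using w by simp
  also have "\<dots> = (\<Sum>i\<in>I. \<Sum>j\<in>I. w i * w j * (K (x i) (x j) + (if i = j then lam else 0)))"
    by (simp add: sum_distrib_left mult_ac)
  also have "\<dots> = (\<Sum>i\<in>I. \<Sum>j\<in>I. w i * w j * K (x i) (x j)) + lam * (\<Sum>i\<in>I. (w i)\<^sup>2)"
    by (rule quadratic_form_add_diagonal[OF I(1)])
  finally have "lam * (\<Sum>i\<in>I. (w i)\<^sup>2) \<le> 0"
    using pos_def_kernel_quadratic_form_nonneg[OF K I, of w] by linarith
  then have "(\<Sum>i\<in>I. (w i)\<^sup>2) = 0"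
    using lam by (simp add: mult_le_0_iff sum_nonneg order.antisym)
  then show ?thesis
    using I(1) by (simp add: sum_nonneg_eq_0_iff)
qed

lemma sum_mult_sum_swap:
  "(\<Sum>j\<in>J. a j * (\<Sum>k\<in>I. b j k * c k)) = (\<Sum>k\<in>I. c k * (\<Sum>j\<in>J. a j * b j k))"
  for a c :: "'i \<Rightarrow> real"
  unfolding sum_distrib_left by (subst sum.swap) (simp add: mult_ac)

lemma sum_mult_delta:
  fixes g :: "'i \<Rightarrow> real"
  assumes "finite I" "j \<in> I"
  shows "(\<Sum>l\<in>I. g l * (if l = j then 1 else 0)) = g j"
    and "(\<Sum>l\<in>I. g l * (if j = l then 1 else 0)) = g j"
proof -
  have "I \<inter> {l. l = j} = {j}" "I \<inter> {l. j = l} = {j}"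
    using assms(2) by auto
  then show "(\<Sum>l\<in>I. g l * (if l = j then 1 else 0)) = g j"
    and "(\<Sum>l\<in>I. g l * (if j = l then 1 else 0)) = g j"
    using assms(1) by (simp_all add: of_bool_def[symmetric])
qed

lemma matrix_right_inverse_imp_left_inverse:
  fixes M N :: "nat \<Rightarrow> nat \<Rightarrow> real"
  assumes I: "finite I"
    and inj: "\<And>w. \<forall>i\<in>I. (\<Sum>j\<in>I. M i j * w j) = 0 \<Longrightarrow> \<forall>i\<in>I. w i = 0"
    and MN: "\<forall>i\<in>I. \<forall>j\<in>I. (\<Sum>l\<in>I. M i l * N l j) = (if i = j then 1 else 0)"
  shows "\<forall>i\<in>I. \<forall>j\<in>I. (\<Sum>l\<in>I. N i l * M l j) = (if i = j then 1 else 0)"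
proof (intro ballI)
  fix i j
  assume "i \<in> I" "j \<in> I"
  define u where "u l = (\<Sum>p\<in>I. N l p * M p j) - (if l = j then 1 else 0)" for l
  have "(\<Sum>l\<in>I. M q l * u l) = 0" if "q \<in> I" for q
  proof -
    have "(\<Sum>l\<in>I. M q l * u l)
        = (\<Sum>l\<in>I. M q l * (\<Sum>p\<in>I. N l p * M p j))
          - (\<Sum>l\<in>I. M q l * (if l = j then 1 else 0))"
      by (simp add: u_def right_diff_distrib sum_subtractf)
    also have "(\<Sum>l\<in>I. M q l * (\<Sum>p\<in>I. N l p * M p j))
        = (\<Sum>p\<in>I. M p j * (\<Sum>l\<in>I. M q l * N l p))"
      by (rule sum_mult_sum_swap)
    also have "\<dots> = (\<Sum>p\<in>I. M p j * (if q = p then 1 else 0))"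
      using MN \<open>q \<in> I\<close> by simp
    finally show ?thesis
      using I \<open>j \<in> I\<close> \<open>q \<in> I\<close> by (simp add: sum_mult_delta)
  qed
  then have "\<forall>l\<in>I. u l = 0"
    using inj by blast
  then show "(\<Sum>l\<in>I. N i l * M l j) = (if i = j then 1 else 0)"
    using \<open>i \<in> I\<close> by (simp add: u_def)
qed

lemma Cholesky_inverse:
  fixes A L \<beta> :: "nat \<Rightarrow> nat \<Rightarrow> real"
  assumes I: "finite I"
    and inj: "\<And>w. \<forall>i\<in>I. (\<Sum>j\<in>I. A i j * w j) = 0 \<Longrightarrow> \<forall>i\<in>I. w i = 0"
    and chol: "\<forall>i\<in>I. \<forall>j\<in>I. (\<Sum>l\<in>I. L i l * L j l) = A i j"
    and beta: "\<forall>i\<in>I. \<forall>j\<in>I. (\<Sum>l\<in>I. L l i * \<beta> l j) = (if i = j then 1 else 0)"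
  shows "\<forall>i\<in>I. \<forall>j\<in>I. (\<Sum>l\<in>I. A i l * (\<Sum>k\<in>I. \<beta> l k * \<beta> j k)) = (if i = j then 1 else 0)"
proof -
  have chol': "(\<Sum>p\<in>I. L j p * L i p) = A i j" if "i \<in> I" "j \<in> I" for i j
    using chol that by (simp add: mult.commute)
  have LT_inj: "\<forall>l\<in>I. u l = 0" if "\<forall>p\<in>I. (\<Sum>l\<in>I. L l p * u l) = 0" for u
  proof (rule inj, intro ballI)
    fix q
    assume "q \<in> I"
    have "(\<Sum>l\<in>I. A q l * u l) = (\<Sum>l\<in>I. u l * (\<Sum>p\<in>I. L l p * L q p))"
      using \<open>q \<in> I\<close> by (intro sum.cong refl) (simp add: chol' mult.commute)
    also have "\<dots> = (\<Sum>p\<in>I. L q p * (\<Sum>l\<in>I. u l * L l p))"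
      by (rule sum_mult_sum_swap)
    also have "\<dots> = 0"
      using that by (simp add: mult.commute)
    finally show "(\<Sum>l\<in>I. A q l * u l) = 0" .
  qed
  have beta_LT: "\<forall>i\<in>I. \<forall>j\<in>I. (\<Sum>l\<in>I. \<beta> i l * L j l) = (if i = j then 1 else 0)"
    by (rule matrix_right_inverse_imp_left_inverse[OF I LT_inj beta])
  have A_beta: "(\<Sum>l\<in>I. A i l * \<beta> l k) = L i k" if "i \<in> I" "k \<in> I" for i k
  proof -
    have "(\<Sum>l\<in>I. A i l * \<beta> l k) = (\<Sum>l\<in>I. \<beta> l k * (\<Sum>p\<in>I. L l p * L i p))"
      using \<open>i \<in> I\<close> by (intro sum.cong refl) (simp add: chol' mult.commute)
    also have "\<dots> = (\<Sum>p\<in>I. L i p * (\<Sum>l\<in>I. \<beta> l k * L l p))"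
      by (rule sum_mult_sum_swap)
    also have "\<dots> = (\<Sum>p\<in>I. L i p * (if p = k then 1 else 0))"
      using beta \<open>k \<in> I\<close> by (intro sum.cong refl) (simp add: mult.commute)
    finally show ?thesis
      using I \<open>k \<in> I\<close> by (simp add: sum_mult_delta)
  qed
  show ?thesis
  proof (intro ballI)
    fix i j
    assume "i \<in> I" "j \<in> I"
    have "(\<Sum>l\<in>I. A i l * (\<Sum>k\<in>I. \<beta> l k * \<beta> j k))
        = (\<Sum>k\<in>I. \<beta> j k * (\<Sum>l\<in>I. A i l * \<beta> l k))"
      by (rule sum_mult_sum_swap)
    also have "\<dots> = (\<Sum>k\<in>I. \<beta> j k * L i k)"
      using A_beta \<open>i \<in> I\<close> by simp
    finally show "(\<Sum>l\<in>I. A i l * (\<Sum>k\<in>I. \<beta> l k * \<beta> j k)) = (if i = j then 1 else 0)"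
      using beta_LT \<open>i \<in> I\<close> \<open>j \<in> I\<close> by auto
  qed
qed

lemma reg_interp_eqI:
  assumes inj: "\<And>w. \<forall>i\<in>{1..m}. (\<Sum>j=1..m. (K (x i) (x j) + (if i = j then lam else 0)) * w j) = 0
      \<Longrightarrow> \<forall>i\<in>{1..m}. w i = 0"
    and \<alpha>: "\<forall>i\<in>{1..m}. (\<Sum>j=1..m. (K (x i) (x j) + (if i = j then lam else 0)) * \<alpha> j) = f (x i)"
  shows "reg_interp K lam x m f = (\<lambda>z. \<Sum>j=1..m. \<alpha> j * K z (x j))"
proof -
  define \<alpha>\<^sub>0 where "\<alpha>\<^sub>0 i = (if i \<in> {1..m} then \<alpha> i else 0)" for i
  have "(THE \<alpha>::nat \<Rightarrow> real. (\<forall>i. i \<notin> {1..m} \<longrightarrow> \<alpha> i = 0) \<and>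
      (\<forall>i\<in>{1..m}. (\<Sum>j=1..m. (K (x i) (x j) + (if i = j then lam else 0)) * \<alpha> j) = f (x i))) = \<alpha>\<^sub>0"
  proof (rule the_equality)
    show "(\<forall>i. i \<notin> {1..m} \<longrightarrow> \<alpha>\<^sub>0 i = 0) \<and>
        (\<forall>i\<in>{1..m}. (\<Sum>j=1..m. (K (x i) (x j) + (if i = j then lam else 0)) * \<alpha>\<^sub>0 j) = f (x i))"
      using \<alpha> by (simp add: \<alpha>\<^sub>0_def)
  next
    fix \<alpha>'
    assume \<alpha>': "(\<forall>i. i \<notin> {1..m} \<longrightarrow> \<alpha>' i = 0) \<and>
        (\<forall>i\<in>{1..m}. (\<Sum>j=1..m. (K (x i) (x j) + (if i = j then lam else 0)) * \<alpha>' j) = f (x i))"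
    have "\<forall>i\<in>{1..m}. (\<Sum>j=1..m. (K (x i) (x j) + (if i = j then lam else 0)) * (\<alpha>' j - \<alpha> j)) = 0"
      using \<alpha> \<alpha>' by (simp add: right_diff_distrib sum_subtractf)
    then have "\<forall>i\<in>{1..m}. \<alpha>' i - \<alpha> i = 0"
      by (rule inj)
    then show "\<alpha>' = \<alpha>\<^sub>0"
      using \<alpha>' by (auto simp: \<alpha>\<^sub>0_def)
  qed
  then show ?thesis
    by (simp add: reg_interp_def \<alpha>\<^sub>0_def)
qed

lemma reg_interp_Cholesky:
  fixes L \<beta> :: "nat \<Rightarrow> nat \<Rightarrow> real"
  assumes K: "pos_def_kernel \<Omega> K" and lam: "lam > 0"
    and x: "inj_on x {1..m}" "x ` {1..m} \<subseteq> \<Omega>"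
    and chol: "\<forall>i\<in>{1..m}. \<forall>j\<in>{1..m}.
      (\<Sum>l=1..m. L i l * L j l) = K (x i) (x j) + (if i = j then lam else 0)"
    and beta: "\<forall>i\<in>{1..m}. \<forall>j\<in>{1..m}. (\<Sum>l=1..m. L l i * \<beta> l j) = (if i = j then 1 else 0)"
  shows "reg_interp K lam x m f z
    = (\<Sum>k=1..m. (\<Sum>j=1..m. \<beta> j k * f (x j)) * (\<Sum>i=1..m. \<beta> i k * K z (x i)))"
proof -
  define A where "A i j = K (x i) (x j) + (if i = j then lam else 0)" for i j
  define \<gamma> where "\<gamma> k = (\<Sum>j=1..m. \<beta> j k * f (x j))" for k
  define \<alpha> where "\<alpha> j = (\<Sum>k=1..m. \<beta> j k * \<gamma> k)" for j
  have inj: "\<forall>i\<in>{1..m}. w i = 0" if "\<forall>i\<in>{1..m}. (\<Sum>j=1..m. A i j * w j) = 0" for w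
    using regularized_kernel_matrix_injective[OF K lam _ x] that by (simp add: A_def)
  have inverse: "\<forall>i\<in>{1..m}. \<forall>j\<in>{1..m}.
      (\<Sum>l=1..m. A i l * (\<Sum>k=1..m. \<beta> l k * \<beta> j k)) = (if i = j then 1 else 0)"
    by (rule Cholesky_inverse[OF _ inj]) (use chol beta in \<open>simp_all add: A_def\<close>)
  have \<alpha>_eq: "\<alpha> j = (\<Sum>l=1..m. f (x l) * (\<Sum>k=1..m. \<beta> j k * \<beta> l k))" for j
    unfolding \<alpha>_def \<gamma>_def by (rule sum_mult_sum_swap)
  have "(\<Sum>j=1..m. A i j * \<alpha> j) = f (x i)" if "i \<in> {1..m}" for i
  proof -
    have "(\<Sum>j=1..m. A i j * \<alpha> j)
        = (\<Sum>l=1..m. f (x l) * (\<Sum>j=1..m. A i j * (\<Sum>k=1..m. \<beta> j k * \<beta> l k)))"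
      unfolding \<alpha>_eq by (subst sum_mult_sum_swap[symmetric]) (simp add: mult.commute)
    also have "\<dots> = (\<Sum>l=1..m. f (x l) * (if i = l then 1 else 0))"
      using inverse that by simp
    finally show ?thesis
      using that by (simp add: sum_mult_delta)
  qed
  then have "reg_interp K lam x m f = (\<lambda>z. \<Sum>j=1..m. \<alpha> j * K z (x j))"
    using inj by (intro reg_interp_eqI) (simp_all add: A_def)
  moreover have "(\<Sum>k=1..m. \<gamma> k * (\<Sum>i=1..m. \<beta> i k * K z (x i)))
      = (\<Sum>i=1..m. \<alpha> i * K z (x i))"
    unfolding sum_mult_sum_swap by (simp add: \<alpha>_def mult.commute)
  ultimately show ?thesis
    by (simp add: \<gamma>_def)
qed

lemma inverse_transpose_lower_triangular_last_row:
  fixes L \<beta> :: "nat \<Rightarrow> nat \<Rightarrow> real"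
  assumes L_lower: "\<forall>i\<in>{1..Suc m}. \<forall>j\<in>{1..Suc m}. i < j \<longrightarrow> L i j = 0"
    and L_diag: "L (Suc m) (Suc m) \<noteq> 0"
    and beta: "\<forall>i\<in>{1..Suc m}. \<forall>j\<in>{1..Suc m}.
      (\<Sum>l=1..Suc m. L l i * \<beta> l j) = (if i = j then 1 else 0)"
    and j: "j \<in> {1..m}"
  shows "\<beta> (Suc m) j = 0"
proof -
  have "L (Suc m) (Suc m) * \<beta> (Suc m) j = (\<Sum>l=1..Suc m. L l (Suc m) * \<beta> l j)"
    using L_lower by simp
  also have "\<dots> = 0"
    using beta j by auto
  finally show ?thesis
    using L_diag by simp
qed

lemma reg_interp_leading_block:
  fixes L \<beta> :: "nat \<Rightarrow> nat \<Rightarrow> real"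
  assumes K: "pos_def_kernel \<Omega> K" and lam: "lam > 0"
    and x: "inj_on x {1..Suc m}" "x ` {1..Suc m} \<subseteq> \<Omega>"
    and L_lower: "\<forall>i\<in>{1..Suc m}. \<forall>j\<in>{1..Suc m}. i < j \<longrightarrow> L i j = 0"
    and L_diag: "L (Suc m) (Suc m) \<noteq> 0"
    and chol: "\<forall>i\<in>{1..Suc m}. \<forall>j\<in>{1..Suc m}.
      (\<Sum>l=1..Suc m. L i l * L j l) = K (x i) (x j) + (if i = j then lam else 0)"
    and beta: "\<forall>i\<in>{1..Suc m}. \<forall>j\<in>{1..Suc m}.
      (\<Sum>l=1..Suc m. L l i * \<beta> l j) = (if i = j then 1 else 0)"
  shows "reg_interp K lam x m f z
    = (\<Sum>k=1..m. (\<Sum>j=1..Suc m. \<beta> j k * f (x j)) * (\<Sum>i=1..Suc m. \<beta> i k * K z (x i)))"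
proof -
  have last_row: "\<beta> (Suc m) k = 0" if "k \<in> {1..m}" for k
    using inverse_transpose_lower_triangular_last_row[OF L_lower L_diag beta that] .
  have last_col: "L i (Suc m) = 0" if "i \<in> {1..m}" for i
    using L_lower that by auto
  have chol_m: "\<forall>i\<in>{1..m}. \<forall>j\<in>{1..m}.
      (\<Sum>l=1..m. L i l * L j l) = K (x i) (x j) + (if i = j then lam else 0)"
  proof (intro ballI)
    fix i j
    assume "i \<in> {1..m}" "j \<in> {1..m}"
    then show "(\<Sum>l=1..m. L i l * L j l) = K (x i) (x j) + (if i = j then lam else 0)"
      using chol[rule_format, of i j] last_col[of i] by simp
  qed
  have beta_m:
    "\<forall>i\<in>{1..m}. \<forall>j\<in>{1..m}. (\<Sum>l=1..m. L l i * \<beta> l j) = (if i = j then 1 else 0)"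
  proof (intro ballI)
    fix i j
    assume "i \<in> {1..m}" "j \<in> {1..m}"
    then show "(\<Sum>l=1..m. L l i * \<beta> l j) = (if i = j then 1 else 0)"
      using beta[rule_format, of i j] last_row[of j] by simp
  qed
  have "reg_interp K lam x m f z
      = (\<Sum>k=1..m. (\<Sum>j=1..m. \<beta> j k * f (x j)) * (\<Sum>i=1..m. \<beta> i k * K z (x i)))"
    by (rule reg_interp_Cholesky[OF K lam _ _ chol_m beta_m])
      (use x in \<open>auto intro: inj_on_subset\<close>)
  also have "\<dots>
      = (\<Sum>k=1..m. (\<Sum>j=1..Suc m. \<beta> j k * f (x j)) * (\<Sum>i=1..Suc m. \<beta> i k * K z (x i)))"
    using last_row by simp
  finally show ?thesis .
qed

theorem proposition2p2:
  fixes \<Omega> :: "(real ^ 'd) set" and K :: "real ^ 'd \<Rightarrow> real ^ 'd \<Rightarrow> real"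
    and lam :: real and n :: nat and x :: "nat \<Rightarrow> real ^ 'd"
    and L \<beta> :: "nat \<Rightarrow> nat \<Rightarrow> real" and f :: "real ^ 'd \<Rightarrow> real"
    and v v\<^sub>l :: "nat \<Rightarrow> real ^ 'd \<Rightarrow> real"
  assumes K: "pos_def_kernel \<Omega> K"
    and lam: "lam > 0"
    and n: "n \<ge> 1"
    and xin: "x ` {1..n} \<subseteq> \<Omega>"
    and xdist: "inj_on x {1..n}"
    and L_lower: "\<forall>i\<in>{1..n}. \<forall>j\<in>{1..n}. i < j \<longrightarrow> L i j = 0"
    and L_diag: "\<forall>i\<in>{1..n}. L i i > 0"
    and chol: "\<forall>i\<in>{1..n}. \<forall>j\<in>{1..n}.
                 (\<Sum>l=1..n. L i l * L j l) = K (x i) (x j) + (if i = j then lam else 0)"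
    and beta: "\<forall>i\<in>{1..n}. \<forall>j\<in>{1..n}.
                 (\<Sum>l=1..n. L l i * \<beta> l j) = (if i = j then 1 else 0)"
    and vl_def: "\<forall>k. v\<^sub>l k = (\<lambda>z. \<Sum>j=1..n. \<beta> j k * Klam K lam z (x j))"
    and v_def: "\<forall>k. v k = (\<lambda>z. \<Sum>j=1..n. \<beta> j k * K z (x j))"
    and f: "f \<in> native_space \<Omega> (Klam K lam)"
  shows "(\<forall>z\<in>\<Omega>. reg_interp K lam x n f z
            = (\<Sum>k=1..n. native_inner \<Omega> (Klam K lam) f (v\<^sub>l k) * v k z)
          \<and> reg_interp K lam x n f z
            = reg_interp K lam x (n - 1) f z + native_inner \<Omega> (Klam K lam) f (v\<^sub>l n) * v n z)
       \<and> (f \<in> native_space \<Omega> K \<longrightarrow>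
            (\<forall>k\<in>{1..n}. native_inner \<Omega> K f (v k) = native_inner \<Omega> (Klam K lam) f (v\<^sub>l k))
          \<and> (\<forall>z\<in>\<Omega>. reg_interp K lam x n f z = (\<Sum>k=1..n. native_inner \<Omega> K f (v k) * v k z)
              \<and> reg_interp K lam x n f z
                = reg_interp K lam x (n - 1) f z + native_inner \<Omega> K f (v n) * v n z))"
proof -
  obtain m where m: "n = Suc m"
    using n by (cases n) auto
  define \<gamma> where "\<gamma> k = (\<Sum>j=1..n. \<beta> j k * f (x j))" for k
  have inner_lam: "native_inner \<Omega> (Klam K lam) f (v\<^sub>l k) = \<gamma> k" for k
    using native_inner_kernel_sum[OF pos_def_kernel_Klam[OF K] f _ xdist xin] lam vl_def
    by (simp add: \<gamma>_def)
  have inner: "native_inner \<Omega> K f (v k) = \<gamma> k" if "f \<in> native_space \<Omega> K" for k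
    using native_inner_kernel_sum[OF K that _ xdist xin] v_def by (simp add: \<gamma>_def)
  have interp: "reg_interp K lam x n f z = (\<Sum>k=1..n. \<gamma> k * v k z)" for z
    using reg_interp_Cholesky[OF K lam xdist xin chol beta] v_def by (simp add: \<gamma>_def)
  have "L n n \<noteq> 0"
    using L_diag[rule_format, of n] n by simp
  then have "reg_interp K lam x (n - 1) f z = (\<Sum>k=1..m. \<gamma> k * v k z)" for z
    using reg_interp_leading_block[OF K lam, of x m L \<beta>] xdist xin L_lower chol beta v_def
    unfolding m by (simp add: \<gamma>_def m del: sum.cl_ivl_Suc)
  then have step: "reg_interp K lam x n f z = reg_interp K lam x (n - 1) f z + \<gamma> n * v n z" for z
    using interp by (simp add: m)
  show ?thesis
    using interp step inner_lam inner by simp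
qed

end
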